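(* Let $n\ge2$. Under the diagonal top-down model on fully heterochronous ranked tree shapes with $n$ leaves, conditionally on the diagonal $(F_{k,k})_{k=0}^{2n-3}$ of the generated $\mathbf{F}$-matrix $F$, the matrix $F$ is uniformly distributed over all $\mathbf{F}$-matrices of fully heterochronous ranked tree shapes with $n$ leaves having that diagonal.
   Context: A fully heterochronous ranked tree shape with $n$ leaves is a rooted full binary tree (every node has out-degree $0$ or $2$), without leaf labels, with $n$ leaves, together with a total ordering of all $2n-1$ nodes (leaves included) such that nodes appear in increasing order along every path from the root to a leaf; the position of a node in this order, numbered $0,\dots,2n-2$, is its rank. Its $\mathbf{F}$-matrix is the $(2n-2)\times(2n-2)$ lower triangular matrix $F$, indices from $0$ to $2n-3$, where for $0\le j\le i$ the entry $F_{i,j}$ is the number of edges from a parent node $v$ to a child node $w$ with rank of $v$ at most $j$ and rank of $w$ larger than $i$ (entries with a negative index are taken to be $0$). The diagonal of such a matrix is a sequence of positive integers with $F_{0,0}=2$, $F_{k,k}=F_{k-1,k-1}\pm1$ and $F_{2n-3,2n-3}=1$; there are $C_{n-1}=\frac1n\binom{2n-2}{n-1}$ such sequences. Diagonal top-down model: first choose the diagonal $(F_{k,k})_{k=0}^{2n-3}$ uniformly at random among all such valid diagonals. Then build the remaining entries row by row: for $k=1,\dots,2n-3$, given rows $0,\dots,k-1$, choose $L\in\{0,\dots,k-1\}$ with probability $(F_{k-1,L}-F_{k-1,L-1})/F_{k-1,k-1}$ and set $F_{k,j}=F_{k-1,j}$ for $j<L$ and $F_{k,j}=F_{k-1,j}-1$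 for $L\le j\le k-1$ (with $F_{k,k}$ the already chosen diagonal entry). Equivalently, the node of rank $k$ is attached as the child end of an edge chosen uniformly at random among the $F_{k-1,k-1}$ edges whose parent has rank at most $k-1$ and whose child has not yet been placed; $L$ is the rank of that parent; the node of rank $k$ is internal if $F_{k,k}=F_{k-1,k-1}+1$ and a leaf otherwise (the last node, of rank $2n-2$, is a leaf attached to the unique remaining edge). *)

theory Defs
  imports "HOL-Probability.Probability"
begin

text \<open>Ranks are identified with nodes: nodes are 0..2n-2, node 0 is the root, and
  par k (for 1 <= k <= 2n-2) is the rank of the parent of node k. Since nodes are totally
  ordered by rank and leaves are unlabelled, a fully heterochronous ranked tree shape is
  exactly such a parent function.\<close>

definition children :: "nat \<Rightarrow> (nat \<Rightarrow> nat) \<Rightarrow> nat \<Rightarrow> nat set" where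
  "children n par v = {k \<in> {1..2*n-2}. par k = v}"

definition is_fh_rts :: "nat \<Rightarrow> (nat \<Rightarrow> nat) \<Rightarrow> bool" where
  "is_fh_rts n par \<longleftrightarrow>
     (\<forall>k\<in>{1..2*n-2}. par k < k) \<and>
     (\<forall>v\<in>{0..2*n-2}. card (children n par v) = 0 \<or> card (children n par v) = 2) \<and>
     card {v\<in>{0..2*n-2}. children n par v = {}} = n"

definition Fmat :: "nat \<Rightarrow> (nat \<Rightarrow> nat) \<Rightarrow> nat \<Rightarrow> nat \<Rightarrow> nat" where
  "Fmat n par i j =
     (if i < 2*n-2 \<and> j \<le> i then card {w \<in> {1..2*n-2}. par w \<le> j \<and> i < w} else 0)"

definition Fmatrices :: "nat \<Rightarrow> (nat \<Rightarrow> nat \<Rightarrow> nat) set" where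
  "Fmatrices n = {Fmat n par | par. is_fh_rts n par}"

definition diag :: "nat \<Rightarrow> (nat \<Rightarrow> nat \<Rightarrow> nat) \<Rightarrow> nat list" where
  "diag n M = map (\<lambda>k. M k k) [0..<2*n-2]"

definition valid_diags :: "nat \<Rightarrow> nat list set" where
  "valid_diags n = {ds. length ds = 2*n-2 \<and> (\<forall>k<2*n-2. ds ! k > 0) \<and> ds ! 0 = 2 \<and>
      (\<forall>k. 1 \<le> k \<and> k < 2*n-2 \<longrightarrow> ds ! k = ds ! (k-1) + 1 \<or> ds ! k + 1 = ds ! (k-1)) \<and>
      ds ! (2*n-3) = 1}"

definition L_choices :: "(nat \<Rightarrow> nat \<Rightarrow> nat) \<Rightarrow> nat \<Rightarrow> nat multiset" where
  "L_choices M k = (\<Sum>L<k. replicate_mset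
      (M (k-1) L - (if L = 0 then 0 else M (k-1) (L-1))) L)"

definition new_row :: "nat list \<Rightarrow> (nat \<Rightarrow> nat \<Rightarrow> nat) \<Rightarrow> nat \<Rightarrow> nat \<Rightarrow> nat \<Rightarrow> nat" where
  "new_row ds M k L j =
     (if j < L then M (k-1) j
      else if j \<le> k-1 then M (k-1) j - 1
      else if j = k then ds ! k else 0)"

fun gen_rows :: "nat list \<Rightarrow> nat \<Rightarrow> (nat \<Rightarrow> nat \<Rightarrow> nat) pmf" where
  "gen_rows ds 0 = return_pmf (\<lambda>i j. if i = 0 \<and> j = 0 then ds ! 0 else 0)"
| "gen_rows ds (Suc k) =
     bind_pmf (gen_rows ds k) (\<lambda>M.
       map_pmf (\<lambda>L. M(Suc k := new_row ds M (Suc k) L)) (pmf_of_multiset (L_choices M (Suc k))))"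

definition diag_top_down :: "nat \<Rightarrow> (nat \<Rightarrow> nat \<Rightarrow> nat) pmf" where
  "diag_top_down n = bind_pmf (pmf_of_set (valid_diags n)) (\<lambda>ds. gen_rows ds (2*n-3))"

end

theory Submission
  imports Defs
begin

text \<open>
  The diagonal fixes which nodes are internal: node v > 0 is internal iff F_{v,v} = F_{v-1,v-1} + 1,
  so every node has a prescribed capacity of 2 or 0 children. Describe the rows 0..k generated so
  far by the parent function of the nodes 1..k: entry (i, j) is the number of child slots of nodes
  of rank at most j that are still free once nodes 1..i are attached. The rows are an injective
  image of the parent function, and the choice of L attaches node k+1 to a parent drawn with
  probability (free slots of the parent) / F_{k,k}. Multiplying these probabilities, every node v
  contributes capacity(v)! / free(v)!, so P(p) times the product of the factorials of the free
  slots depends only on the diagonal. As F_{2n-3,2n-3} = 1, at most one slot is free after row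
  2n-3, all these factorials are 1 and the parent function is uniform on its support; attaching
  the last node to the remaining free slot identifies that support with the F-matrices of the
  given diagonal.
\<close>

lemma sum_card_fibres_atMost:
  fixes f :: "'a \<Rightarrow> nat"
  assumes "finite W"
  shows "(\<Sum>v\<le>j. card {w\<in>W. f w = v}) = card {w\<in>W. f w \<le> j}"
proof (induction j)
  case (Suc j)
  have "{w\<in>W. f w \<le> Suc j} = {w\<in>W. f w \<le> j} \<union> {w\<in>W. f w = Suc j}" by auto
  moreover have "card ({w\<in>W. f w \<le> j} \<union> {w\<in>W. f w = Suc j})
      = card {w\<in>W. f w \<le> j} + card {w\<in>W. f w = Suc j}"
    by (rule card_Un_disjoint) (use assms in auto)
  ultimately show ?case using Suc by simp
qed simp

lemma sums_atMost_eq_iff: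
  fixes f g :: "nat \<Rightarrow> 'a::cancel_comm_monoid_add"
  shows "(\<forall>k\<le>m. (\<Sum>v\<le>k. f v) = (\<Sum>v\<le>k. g v)) \<longleftrightarrow> (\<forall>v\<le>m. f v = g v)"
proof
  assume sums: "\<forall>k\<le>m. (\<Sum>v\<le>k. f v) = (\<Sum>v\<le>k. g v)"
  show "\<forall>v\<le>m. f v = g v"
  proof (intro allI impI)
    fix v assume v: "v \<le> m"
    show "f v = g v"
    proof (cases v)
      case (Suc u)
      then show ?thesis
        using v sums[rule_format, of v] sums[rule_format, of u] by (simp add: atMost_Suc)
    qed (use v sums in auto)
  qed
qed simp

lemma count_sum_replicate_mset_atMost:
  "count (\<Sum>L\<le>(m::nat). replicate_mset (f L) L) x = (if x \<le> m then f x else 0)"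
  by (induct m) (auto simp: atMost_Suc le_Suc_eq)

lemma size_sum_replicate_mset_atMost:
  "size (\<Sum>L\<le>(m::nat). replicate_mset (f L) L) = (\<Sum>L\<le>m. f L)"
  by (induct m) (auto simp: atMost_Suc)

lemma prod_fact_decrement:
  assumes "finite A" "L \<in> A" "f L > 0"
  shows "real (f L) * (\<Prod>v\<in>A. fact (f v - (if v = L then 1 else 0)))
    = (\<Prod>v\<in>A. fact (f v) :: real)"
proof -
  have "(\<Prod>v\<in>A. fact (f v - (if v = L then 1 else 0)) :: real)
      = fact (f L - 1) * (\<Prod>v\<in>A - {L}. fact (f v))"
    using assms by (subst prod.remove[of _ L]) (auto intro!: prod.cong)
  moreover have "(\<Prod>v\<in>A. fact (f v) :: real) = fact (f L) * (\<Prod>v\<in>A - {L}. fact (f v))"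
    using assms by (subst prod.remove[of _ L]) auto
  moreover have "(fact (f L) :: real) = f L * fact (f L - 1)"
    using assms(3) by (simp add: fact_reduce)
  ultimately show ?thesis by simp
qed

lemma pmf_of_set_if_pmf_constant:
  assumes "finite S" "set_pmf p \<subseteq> S" "\<And>x. x \<in> S \<Longrightarrow> pmf p x = c"
  shows "p = pmf_of_set S"
proof -
  have "real (card S) * c = 1"
    using sum_pmf_eq_1[OF assms(1,2)] assms(3) by simp
  then have S: "S \<noteq> {}" by auto
  with \<open>real (card S) * c = 1\<close> have c: "c = 1 / card S"
    using assms(1) by (simp add: field_simps)
  show ?thesis
  proof (rule pmf_eqI)
    fix x
    show "pmf p x = pmf (pmf_of_set S) x"
      using assms S c by (cases "x \<in> S") (auto simp: pmf_eq_0_set_pmf)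
  qed
qed

lemma cond_pmf_bind_pmf_of_set_fibre:
  assumes A: "finite A" "a \<in> A"
    and fibre: "\<And>b x. b \<in> A \<Longrightarrow> x \<in> set_pmf (G b) \<Longrightarrow> f x = b"
  shows "cond_pmf (bind_pmf (pmf_of_set A) G) {x. f x = a} = G a"
proof -
  let ?p = "bind_pmf (pmf_of_set A) G"
  have "A \<noteq> {}" using A by auto
  have "map_pmf f ?p = bind_pmf (pmf_of_set A) return_pmf"
    unfolding map_bind_pmf using A \<open>A \<noteq> {}\<close> fibre
    by (intro bind_pmf_cong refl) (auto simp: map_pmf_eq_return_pmf_iff)
  then have "map_pmf f ?p = pmf_of_set A" by (simp add: bind_return_pmf')
  then have measure: "measure (measure_pmf ?p) {x. f x = a} = 1 / real (card A)"
    using A \<open>A \<noteq> {}\<close> pmf_map[of f ?p a] by (simp add: vimage_def)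
  have pmf: "pmf ?p x = pmf (G a) x / real (card A)" if "f x = a" for x
  proof -
    have "pmf (G b) x = 0" if "b \<in> A" "b \<noteq> a" for b
      using fibre[OF that(1)] \<open>f x = a\<close> that(2) by (auto simp: pmf_eq_0_set_pmf)
    then have "(\<Sum>b\<in>A. pmf (G b) x) = pmf (G a) x"
      using A by (subst sum.mono_neutral_right[of A "{a}"]) auto
    then show ?thesis using A \<open>A \<noteq> {}\<close> by (simp add: pmf_bind_pmf_of_set)
  qed
  have "set_pmf ?p \<inter> {x. f x = a} \<noteq> {}"
  proof -
    obtain x where "x \<in> set_pmf (G a)" using set_pmf_not_empty by fast
    then have "x \<in> set_pmf ?p \<inter> {x. f x = a}"
      using A \<open>A \<noteq> {}\<close> fibre by auto
    then show ?thesis by blast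
  qed
  moreover have "pmf (G a) x = 0" if "f x \<noteq> a" for x
    using fibre[OF A(2)] that by (auto simp: pmf_eq_0_set_pmf)
  moreover have "real (card A) > 0" using A by (auto simp: card_gt_0_iff)
  ultimately show ?thesis
    by (intro pmf_eqI) (simp add: pmf_cond measure pmf)
qed

definition capacity :: "nat list \<Rightarrow> nat \<Rightarrow> nat" where
  "capacity ds v = (if v = 0 \<or> ds ! v = ds ! (v - 1) + 1 then 2 else 0)"

definition child_count :: "(nat \<Rightarrow> nat) \<Rightarrow> nat \<Rightarrow> nat \<Rightarrow> nat" where
  "child_count p k v = card {w\<in>{1..k}. p w = v}"

definition free_slots :: "nat list \<Rightarrow> (nat \<Rightarrow> nat) \<Rightarrow> nat \<Rightarrow> nat \<Rightarrow> nat" where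
  "free_slots ds p k v = capacity ds v - child_count p k v"

definition partial_trees :: "nat list \<Rightarrow> nat \<Rightarrow> (nat \<Rightarrow> nat) set" where
  "partial_trees ds k = {p. (\<forall>w. w \<notin> {1..k} \<longrightarrow> p w = 0) \<and> (\<forall>w\<in>{1..k}. p w < w) \<and>
     (\<forall>v. child_count p k v \<le> capacity ds v)}"

definition slot_choices :: "nat list \<Rightarrow> (nat \<Rightarrow> nat) \<Rightarrow> nat \<Rightarrow> nat multiset" where
  "slot_choices ds p k = (\<Sum>L\<le>k. replicate_mset (free_slots ds p k L) L)"

fun parent_process :: "nat list \<Rightarrow> nat \<Rightarrow> (nat \<Rightarrow> nat) pmf" where
  "parent_process ds 0 = return_pmf (\<lambda>_. 0)"
| "parent_process ds (Suc k) = bind_pmf (parent_process ds k) (\<lambda>p.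
     map_pmf (\<lambda>L. p(Suc k := L)) (pmf_of_multiset (slot_choices ds p k)))"

definition partial_Fmat :: "nat list \<Rightarrow> nat \<Rightarrow> (nat \<Rightarrow> nat) \<Rightarrow> nat \<Rightarrow> nat \<Rightarrow> nat" where
  "partial_Fmat ds k p i j = (if i \<le> k \<and> j \<le> i then (\<Sum>v\<le>j. free_slots ds p i v) else 0)"

definition path_weight :: "nat list \<Rightarrow> nat \<Rightarrow> real" where
  "path_weight ds k = (\<Prod>v\<le>k. fact (capacity ds v)) / (\<Prod>i<k. real (ds ! i))"

lemma child_count_fun_upd:
  "child_count (p(Suc k := L)) (Suc k) v = child_count p k v + (if v = L then 1 else 0)"
proof -
  have split: "{w\<in>{1..Suc k}. (p(Suc k := L)) w = v}
      = {w\<in>{1..k}. p w = v} \<union> (if v = L then {Suc k} else {})"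
    by auto
  show ?thesis unfolding child_count_def split by (subst card_Un_disjoint) auto
qed

lemma free_slots_fun_upd:
  "free_slots ds (p(Suc k := L)) (Suc k) v = free_slots ds p k v - (if v = L then 1 else 0)"
  unfolding free_slots_def child_count_fun_upd by simp

lemma child_count_fun_upd_below: "i \<le> k \<Longrightarrow> child_count (p(Suc k := L)) i v = child_count p i v"
  unfolding child_count_def by (rule arg_cong[where f=card]) auto

lemma child_count_mono: "i \<le> k \<Longrightarrow> child_count p i v \<le> child_count p k v"
  unfolding child_count_def by (rule card_mono) auto

lemma child_count_le_capacity: "p \<in> partial_trees ds k \<Longrightarrow> child_count p k v \<le> capacity ds v"
  unfolding partial_trees_def by blast

lemma child_count_eq_0:
  assumes "p \<in> partial_trees ds k" "k \<le> v"
  shows "child_count p k v = 0"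
proof -
  have "p w < w" if "w \<in> {1..k}" for w
    using assms that unfolding partial_trees_def by auto
  then have "{w\<in>{1..k}. p w = v} = {}" using assms(2) by fastforce
  then show ?thesis by (simp add: child_count_def)
qed

lemma sum_child_count:
  assumes "p \<in> partial_trees ds k" "i \<le> k"
  shows "(\<Sum>v\<le>i. child_count p i v) = i"
proof -
  have "(\<Sum>v\<le>i. child_count p i v) = card {w\<in>{1..i}. p w \<le> i}"
    unfolding child_count_def by (rule sum_card_fibres_atMost) simp
  also have "{w\<in>{1..i}. p w \<le> i} = {1..i}"
  proof -
    have "p w < w" if "w \<in> {1..i}" for w
      using assms that unfolding partial_trees_def by auto
    then show ?thesis by force
  qed
  finally show ?thesis by simp
qed

lemma partial_trees_fun_upd:
  assumes "p \<in> partial_trees ds k" "L \<le> k" "free_slots ds p k L > 0"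
  shows "p(Suc k := L) \<in> partial_trees ds (Suc k)"
  using assms unfolding partial_trees_def free_slots_def by (auto simp: child_count_fun_upd)

lemma partial_trees_SucD:
  assumes "p \<in> partial_trees ds (Suc k)"
  shows "p(Suc k := 0) \<in> partial_trees ds k" "p (Suc k) \<le> k"
    "free_slots ds (p(Suc k := 0)) k (p (Suc k)) > 0"
proof -
  let ?q = "p(Suc k := 0)" and ?L = "p (Suc k)"
  have count: "child_count p (Suc k) v = child_count ?q k v + (if v = ?L then 1 else 0)" for v
    using child_count_fun_upd[of ?q k ?L v] by simp
  note cap = child_count_le_capacity[OF assms]
  have "child_count ?q k v \<le> capacity ds v" for v
    using count[of v] cap[of v] by simp
  then show "?q \<in> partial_trees ds k"
    using assms unfolding partial_trees_def by auto
  show "free_slots ds ?q k ?L > 0"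
    using count[of ?L] cap[of ?L] unfolding free_slots_def by simp
  have "?L < Suc k" using assms unfolding partial_trees_def by simp
  then show "?L \<le> k" by simp
qed

lemma partial_trees_outside: "p \<in> partial_trees ds k \<Longrightarrow> p (Suc k) = 0"
  unfolding partial_trees_def by auto

lemma finite_partial_trees: "finite (partial_trees ds k)"
proof (rule finite_subset)
  show "partial_trees ds k \<subseteq> {f. \<forall>x. (x \<in> {1..k} \<longrightarrow> f x \<in> {..k}) \<and> (x \<notin> {1..k} \<longrightarrow> f x = 0)}"
    unfolding partial_trees_def by (auto, meson atLeastAtMost_iff less_imp_le_nat order_trans)
  show "finite \<dots>" by (rule finite_set_of_finite_funs) auto
qed

lemma count_slot_choices:
  "count (slot_choices ds p k) L = (if L \<le> k then free_slots ds p k L else 0)"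
  unfolding slot_choices_def by (rule count_sum_replicate_mset_atMost)

lemma in_slot_choices_iff: "L \<in># slot_choices ds p k \<longleftrightarrow> L \<le> k \<and> free_slots ds p k L > 0"
  using count_slot_choices[of ds p k L] by (simp flip: count_greater_zero_iff)

lemma partial_Fmat_row:
  "j \<le> k \<Longrightarrow> partial_Fmat ds k p k j = (\<Sum>v\<le>j. free_slots ds p k v)"
  by (simp add: partial_Fmat_def)

lemma path_weight_Suc:
  "path_weight ds (Suc k) = path_weight ds k * fact (capacity ds (Suc k)) / ds ! k"
  by (simp add: path_weight_def atMost_Suc lessThan_Suc field_simps)

lemma L_choices_partial_Fmat:
  "L_choices (partial_Fmat ds k p) (Suc k) = slot_choices ds p k"
proof -
  have diff: "partial_Fmat ds k p k L - (if L = 0 then 0 else partial_Fmat ds k p k (L - 1))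
      = free_slots ds p k L" if "L \<le> k" for L
    using that partial_Fmat_row[of L k ds p] partial_Fmat_row[of "L - 1" k ds p]
    by (cases L) (simp_all add: atMost_Suc)
  show ?thesis unfolding L_choices_def slot_choices_def lessThan_Suc_atMost
    by (intro sum.cong refl) (simp only: diff atMost_iff diff_Suc_1)
qed

lemma new_row_inj:
  assumes "La \<le> k" "Lb \<le> k" "free_slots ds p k La > 0" "free_slots ds p k Lb > 0"
    and eq: "new_row ds (partial_Fmat ds k p) (Suc k) La = new_row ds (partial_Fmat ds k p) (Suc k) Lb"
  shows "La = Lb"
proof -
  \<comment> \<open>L is the first column in which the new row falls below row k.\<close>
  have differ: "new_row ds (partial_Fmat ds k p) (Suc k) L L \<noteq> new_row ds (partial_Fmat ds k p) (Suc k) L' L"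
    if "L < L'" "L' \<le> k" "free_slots ds p k L > 0" for L L'
  proof -
    have "free_slots ds p k L \<le> (\<Sum>v\<le>L. free_slots ds p k v)" by (rule member_le_sum) auto
    then have "partial_Fmat ds k p k L > 0"
      using that partial_Fmat_row[of L k ds p] by simp
    then show ?thesis using that by (simp add: new_row_def)
  qed
  show ?thesis
  proof (rule linorder_cases[of La Lb])
    assume "La < Lb"
    then show ?thesis using differ[of La Lb] assms(2,3) fun_cong[OF eq, of La] by simp
  next
    assume "Lb < La"
    then show ?thesis using differ[of Lb La] assms(1,4) fun_cong[OF eq, of Lb] by simp
  qed
qed

lemma children_above_last:
  assumes "\<forall>w\<in>{1..2*n-2}. par w < w" "2*n-3 < v"
  shows "children n par v = {}"
  using assms unfolding children_def by fastforce

lemma Fmat_diag_add_eq_sum_children: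
  assumes par_lt: "\<forall>w\<in>{1..2*n-2}. par w < w" and k: "k < 2*n-2"
  shows "Fmat n par k k + k = (\<Sum>v\<le>k. card (children n par v))"
proof -
  have "par w < w" if "w \<in> {1..k}" for w
    using par_lt k that by auto
  then have "{w\<in>{1..2*n-2}. par w \<le> k} = {w\<in>{1..2*n-2}. par w \<le> k \<and> k < w} \<union> {1..k}"
    using k by force
  then have "card {w\<in>{1..2*n-2}. par w \<le> k} = card {w\<in>{1..2*n-2}. par w \<le> k \<and> k < w} + k"
    by (simp add: card_Un_disjoint disjoint_iff)
  moreover have "(\<Sum>v\<le>k. card (children n par v)) = card {w\<in>{1..2*n-2}. par w \<le> k}"
    unfolding children_def by (rule sum_card_fibres_atMost) simp
  ultimately show ?thesis using k by (simp add: Fmat_def)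
qed

lemma valid_diags_step:
  assumes "ds \<in> valid_diags n" "Suc k < 2*n-2"
  shows "ds ! Suc k = ds ! k + 1 \<or> ds ! Suc k + 1 = ds ! k"
proof -
  have "\<forall>k. 1 \<le> k \<and> k < 2*n-2 \<longrightarrow> ds ! k = ds ! (k-1) + 1 \<or> ds ! k + 1 = ds ! (k-1)"
    using assms(1) unfolding valid_diags_def by blast
  then show ?thesis using assms(2) by (metis diff_Suc_1 le_add1 plus_1_eq_Suc)
qed

lemma finite_valid_diags: "finite (valid_diags n)"
proof -
  have "ds ! k \<le> k + 2" if ds: "ds \<in> valid_diags n" and "k < 2*n-2" for ds k
    using \<open>k < 2*n-2\<close>
  proof (induction k)
    case (Suc k)
    then show ?case using valid_diags_step[OF ds Suc.prems] by auto
  qed (use ds in \<open>simp add: valid_diags_def\<close>)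
  then have "valid_diags n \<subseteq> {ds. set ds \<subseteq> {..2*n} \<and> length ds = 2*n-2}"
    by (fastforce simp: valid_diags_def in_set_conv_nth)
  then show ?thesis using finite_subset finite_lists_length_eq[of "{..2*n}"] by blast
qed

context
  fixes n :: nat and ds :: "nat list"
  assumes n_ge_2: "n \<ge> 2" and valid: "ds \<in> valid_diags n"
begin

lemma diag_entry_pos: "k < 2*n-2 \<Longrightarrow> ds ! k > 0"
  using valid unfolding valid_diags_def by auto

lemma sum_capacity: "k < 2*n-2 \<Longrightarrow> (\<Sum>v\<le>k. capacity ds v) = ds ! k + k"
proof (induction k)
  case 0
  then show ?case using valid by (simp add: valid_diags_def capacity_def)
next
  case (Suc k)
  then show ?case using valid_diags_step[OF valid Suc.prems] by (auto simp: atMost_Suc capacity_def)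
qed

lemma sum_free_slots:
  assumes "p \<in> partial_trees ds k" "i \<le> k" "k < 2*n-2"
  shows "(\<Sum>v\<le>i. free_slots ds p i v) = ds ! i"
proof -
  have "child_count p i v \<le> capacity ds v" for v
    using child_count_mono[OF assms(2)] child_count_le_capacity[OF assms(1)] by (rule order_trans)
  then have "(\<Sum>v\<le>i. free_slots ds p i v) = (\<Sum>v\<le>i. capacity ds v) - (\<Sum>v\<le>i. child_count p i v)"
    unfolding free_slots_def by (intro sum_subtractf_nat) auto
  also have "\<dots> = ds ! i" using sum_capacity[of i] sum_child_count[OF assms(1,2)] assms by simp
  finally show ?thesis .
qed

lemma size_slot_choices:
  "p \<in> partial_trees ds k \<Longrightarrow> k < 2*n-2 \<Longrightarrow> size (slot_choices ds p k) = ds ! k"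
  unfolding slot_choices_def size_sum_replicate_mset_atMost using sum_free_slots by simp

lemma slot_choices_nonempty:
  "p \<in> partial_trees ds k \<Longrightarrow> k < 2*n-2 \<Longrightarrow> slot_choices ds p k \<noteq> {#}"
  using size_slot_choices diag_entry_pos by fastforce

lemma set_pmf_parent_process: "k < 2*n-2 \<Longrightarrow> set_pmf (parent_process ds k) \<subseteq> partial_trees ds k"
proof (induction k)
  case 0
  then show ?case by (auto simp: partial_trees_def child_count_def)
next
  case (Suc k)
  show ?case
  proof
    fix p' assume "p' \<in> set_pmf (parent_process ds (Suc k))"
    then obtain p L where p: "p \<in> set_pmf (parent_process ds k)"
      and L: "L \<in> set_pmf (pmf_of_multiset (slot_choices ds p k))" and p': "p' = p(Suc k := L)"
      by auto
    have "p \<in> partial_trees ds k" using p Suc by auto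
    moreover from this have "L \<in># slot_choices ds p k"
      using L slot_choices_nonempty Suc.prems by simp
    ultimately show "p' \<in> partial_trees ds (Suc k)"
      using partial_trees_fun_upd p' in_slot_choices_iff by auto
  qed
qed

lemma pmf_parent_process_Suc:
  assumes k: "k < 2*n-2" and q: "q \<in> partial_trees ds k" and "L \<le> k"
  shows "pmf (parent_process ds (Suc k)) (q(Suc k := L))
    = free_slots ds q k L / ds ! k * pmf (parent_process ds k) q"
proof -
  define g where "g = (\<lambda>a. map_pmf (\<lambda>L. a(Suc k := L)) (pmf_of_multiset (slot_choices ds a k)))"
  have "pmf (parent_process ds (Suc k)) (q(Suc k := L))
      = (\<integral>a. pmf (g a) (q(Suc k := L)) \<partial>measure_pmf (parent_process ds k))"
    by (simp add: pmf_bind g_def)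
  also have "\<dots> = (\<Sum>a\<in>{q}. pmf (g a) (q(Suc k := L)) * pmf (parent_process ds k) a)"
  proof (rule integral_measure_pmf_real)
    fix a assume a: "a \<in> set_pmf (parent_process ds k)" "pmf (g a) (q(Suc k := L)) \<noteq> 0"
    then have "a \<in> partial_trees ds k" using set_pmf_parent_process[OF k] by auto
    obtain L' where eq: "q(Suc k := L) = a(Suc k := L')"
      using a unfolding g_def by (auto simp: set_pmf_iff[symmetric])
    have "a x = q x" for x
      using fun_cong[OF eq, of x] partial_trees_outside[OF q]
        partial_trees_outside[OF \<open>a \<in> partial_trees ds k\<close>]
      by (cases "x = Suc k") auto
    then show "a \<in> {q}" by auto
  qed simp
  also have "\<dots> = pmf (g q) (q(Suc k := L)) * pmf (parent_process ds k) q" by simp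
  also have "pmf (g q) (q(Suc k := L)) = pmf (pmf_of_multiset (slot_choices ds q k)) L"
    unfolding g_def by (rule pmf_map_inj') (auto simp: inj_def dest: fun_cong[where x="Suc k"])
  also have "\<dots> = free_slots ds q k L / ds ! k"
    using slot_choices_nonempty[OF q k] size_slot_choices[OF q k] count_slot_choices \<open>L \<le> k\<close>
    by simp
  finally show ?thesis .
qed

lemma pmf_parent_process:
  "k < 2*n-2 \<Longrightarrow> p \<in> partial_trees ds k \<Longrightarrow>
    pmf (parent_process ds k) p * (\<Prod>v\<le>k. fact (free_slots ds p k v)) = path_weight ds k"
proof (induction k arbitrary: p)
  case 0
  then have "p = (\<lambda>_. 0)" unfolding partial_trees_def by auto
  then show ?case by (simp add: free_slots_def child_count_def capacity_def path_weight_def)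
next
  case (Suc k p)
  define q where "q = p(Suc k := 0)"
  define L where "L = p (Suc k)"
  have q: "q \<in> partial_trees ds k" and "L \<le> k" and free: "free_slots ds q k L > 0"
    using partial_trees_SucD[OF Suc.prems(2)] unfolding q_def L_def by auto
  have p: "p = q(Suc k := L)" unfolding q_def L_def by simp
  have k: "k < 2*n-2" using Suc.prems by simp
  define P where "P = (\<Prod>v\<le>k. fact (free_slots ds q k v - (if v = L then 1 else 0)) :: real)"
  have "free_slots ds p (Suc k) (Suc k) = capacity ds (Suc k)"
    using child_count_eq_0[OF q, of "Suc k"] \<open>L \<le> k\<close>
    by (simp add: p free_slots_fun_upd) (simp add: free_slots_def)
  then have prod_p: "(\<Prod>v\<le>Suc k. fact (free_slots ds p (Suc k) v)) = P * fact (capacity ds (Suc k))"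
    unfolding P_def by (simp add: atMost_Suc p free_slots_fun_upd mult.commute)
  have prod_q: "real (free_slots ds q k L) * P = (\<Prod>v\<le>k. fact (free_slots ds q k v))"
    unfolding P_def using \<open>L \<le> k\<close> free by (intro prod_fact_decrement) auto
  have step: "pmf (parent_process ds (Suc k)) p
      = free_slots ds q k L / ds ! k * pmf (parent_process ds k) q"
    unfolding p by (rule pmf_parent_process_Suc[OF k q \<open>L \<le> k\<close>])
  have "pmf (parent_process ds (Suc k)) p * (\<Prod>v\<le>Suc k. fact (free_slots ds p (Suc k) v))
      = pmf (parent_process ds k) q * (real (free_slots ds q k L) * P) * fact (capacity ds (Suc k)) / ds ! k"
    unfolding prod_p step by simp
  also have "\<dots> = path_weight ds (Suc k)"
    unfolding prod_q Suc.IH[OF k q] path_weight_Suc ..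
  finally show ?case .
qed

lemma new_row_partial_Fmat:
  assumes p: "p \<in> partial_trees ds k" and "L \<le> k" and free: "free_slots ds p k L > 0"
    and k: "Suc k < 2*n-2"
  shows "new_row ds (partial_Fmat ds k p) (Suc k) L = partial_Fmat ds (Suc k) (p(Suc k := L)) (Suc k)"
proof
  fix j
  have row: "partial_Fmat ds (Suc k) (p(Suc k := L)) (Suc k) j
      = (\<Sum>v\<le>j. free_slots ds p k v - (if v = L then 1 else 0))" if "j \<le> Suc k"
    using that by (simp add: partial_Fmat_def free_slots_fun_upd)
  consider "j < L" | "L \<le> j" "j \<le> k" | "j = Suc k" | "Suc k < j" by linarith
  then show "new_row ds (partial_Fmat ds k p) (Suc k) L j = partial_Fmat ds (Suc k) (p(Suc k := L)) (Suc k) j"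
  proof cases
    case 1
    then show ?thesis using \<open>L \<le> k\<close> row partial_Fmat_row[of j k ds p] by (simp add: new_row_def)
  next
    case 2
    have "(\<Sum>v\<le>j. free_slots ds p k v - (if v = L then 1 else 0))
        = (free_slots ds p k L - 1) + (\<Sum>v\<in>{..j}-{L}. free_slots ds p k v)"
      using 2 by (subst sum.remove[of _ L]) (auto intro!: sum.cong)
    also have "\<dots> = (\<Sum>v\<le>j. free_slots ds p k v) - 1"
      using 2 free by (subst (2) sum.remove[of _ L]) auto
    finally show ?thesis using 2 row partial_Fmat_row[of j k ds p] by (simp add: new_row_def)
  next
    case 3
    have "partial_Fmat ds (Suc k) (p(Suc k := L)) (Suc k) (Suc k) = ds ! Suc k"
      using sum_free_slots[OF partial_trees_fun_upd[OF p \<open>L \<le> k\<close> free] le_refl k]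
      by (simp add: partial_Fmat_def)
    then show ?thesis using 3 \<open>L \<le> k\<close> by (simp add: new_row_def)
  next
    case 4
    then show ?thesis by (simp add: new_row_def partial_Fmat_def)
  qed
qed

lemma partial_Fmat_Suc:
  assumes "p \<in> partial_trees ds k" "L \<le> k" "free_slots ds p k L > 0" "Suc k < 2*n-2"
  shows "(partial_Fmat ds k p)(Suc k := new_row ds (partial_Fmat ds k p) (Suc k) L)
    = partial_Fmat ds (Suc k) (p(Suc k := L))"
proof
  fix i
  show "((partial_Fmat ds k p)(Suc k := new_row ds (partial_Fmat ds k p) (Suc k) L)) i
      = partial_Fmat ds (Suc k) (p(Suc k := L)) i"
    using new_row_partial_Fmat[OF assms]
    by (cases "i = Suc k")
      (auto simp: partial_Fmat_def free_slots_def child_count_fun_upd_below)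
qed

lemma gen_rows_eq_map_parent_process:
  "k < 2*n-2 \<Longrightarrow> gen_rows ds k = map_pmf (partial_Fmat ds k) (parent_process ds k)"
proof (induction k)
  case 0
  have "ds ! 0 = 2" using valid unfolding valid_diags_def by auto
  then show ?case
    by (auto simp: partial_Fmat_def free_slots_def child_count_def capacity_def intro!: ext)
next
  case (Suc k)
  have k: "k < 2*n-2" using Suc.prems by simp
  show ?case
    unfolding gen_rows.simps parent_process.simps Suc.IH[OF k] bind_map_pmf map_bind_pmf map_pmf_comp
  proof (intro bind_pmf_cong refl)
    fix p assume "p \<in> set_pmf (parent_process ds k)"
    then have p: "p \<in> partial_trees ds k" using set_pmf_parent_process[OF k] by auto
    show "map_pmf (\<lambda>L. (partial_Fmat ds k p)(Suc k := new_row ds (partial_Fmat ds k p) (Suc k) L))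
            (pmf_of_multiset (L_choices (partial_Fmat ds k p) (Suc k))) =
          map_pmf (\<lambda>L. partial_Fmat ds (Suc k) (p(Suc k := L))) (pmf_of_multiset (slot_choices ds p k))"
      unfolding L_choices_partial_Fmat
    proof (intro map_pmf_cong refl)
      fix L assume "L \<in> set_pmf (pmf_of_multiset (slot_choices ds p k))"
      then have "L \<in># slot_choices ds p k" using slot_choices_nonempty[OF p k] by simp
      then show "(partial_Fmat ds k p)(Suc k := new_row ds (partial_Fmat ds k p) (Suc k) L)
          = partial_Fmat ds (Suc k) (p(Suc k := L))"
        using partial_Fmat_Suc[OF p] Suc.prems in_slot_choices_iff by simp
    qed
  qed
qed

lemma inj_on_partial_Fmat: "k < 2*n-2 \<Longrightarrow> inj_on (partial_Fmat ds k) (partial_trees ds k)"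
proof (induction k)
  case 0
  show ?case by (rule inj_onI) (auto simp: partial_trees_def)
next
  case (Suc k)
  have k: "k < 2*n-2" using Suc.prems by simp
  show ?case
  proof (rule inj_onI)
    fix p1 p2 assume p1: "p1 \<in> partial_trees ds (Suc k)" and p2: "p2 \<in> partial_trees ds (Suc k)"
      and eq: "partial_Fmat ds (Suc k) p1 = partial_Fmat ds (Suc k) p2"
    define q1 q2 where "q1 = p1(Suc k := 0)" and "q2 = p2(Suc k := 0)"
    define L1 L2 where "L1 = p1 (Suc k)" and "L2 = p2 (Suc k)"
    note q1 = partial_trees_SucD[OF p1, folded q1_def L1_def]
    note q2 = partial_trees_SucD[OF p2, folded q2_def L2_def]
    let ?new = "\<lambda>q L. new_row ds (partial_Fmat ds k q) (Suc k) L"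
    have "p1 = q1(Suc k := L1)" "p2 = q2(Suc k := L2)"
      unfolding q1_def q2_def L1_def L2_def by simp_all
    with eq have E: "(partial_Fmat ds k q1)(Suc k := ?new q1 L1) = (partial_Fmat ds k q2)(Suc k := ?new q2 L2)"
      using partial_Fmat_Suc[OF q1 Suc.prems] partial_Fmat_Suc[OF q2 Suc.prems]
      by simp
    have "partial_Fmat ds k q1 i = partial_Fmat ds k q2 i" for i
      using fun_cong[OF E, of i] by (cases "i = Suc k") (auto simp: partial_Fmat_def)
    then have "q1 = q2" using Suc.IH[OF k] q1(1) q2(1) by (auto dest: inj_onD)
    moreover have "L1 = L2"
      using new_row_inj[OF q1(2) q2(2) q1(3)] q2(3) fun_cong[OF E, of "Suc k"] \<open>q1 = q2\<close> by simp
    ultimately show "p1 = p2" using \<open>p1 = q1(Suc k := L1)\<close> \<open>p2 = q2(Suc k := L2)\<close> by simp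
  qed
qed

lemma sum_free_slots_last:
  "p \<in> partial_trees ds (2*n-3) \<Longrightarrow> (\<Sum>v\<le>2*n-3. free_slots ds p (2*n-3) v) = 1"
  using sum_free_slots[of p "2*n-3" "2*n-3"] n_ge_2 valid by (simp add: valid_diags_def)

lemma free_slots_last_le_1:
  assumes "p \<in> partial_trees ds (2*n-3)" "v \<le> 2*n-3"
  shows "free_slots ds p (2*n-3) v \<le> 1"
proof -
  have "free_slots ds p (2*n-3) v \<le> (\<Sum>v\<le>2*n-3. free_slots ds p (2*n-3) v)"
    using assms(2) by (intro member_le_sum) auto
  also have "\<dots> = 1" by (rule sum_free_slots_last[OF assms(1)])
  finally show ?thesis .
qed

lemma parent_process_last: "parent_process ds (2*n-3) = pmf_of_set (partial_trees ds (2*n-3))"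
proof (rule pmf_of_set_if_pmf_constant)
  have N: "2*n-3 < 2*n-2" using n_ge_2 by simp
  show "set_pmf (parent_process ds (2*n-3)) \<subseteq> partial_trees ds (2*n-3)"
    by (rule set_pmf_parent_process[OF N])
  fix p assume p: "p \<in> partial_trees ds (2*n-3)"
  have "fact (free_slots ds p (2*n-3) v) = (1::real)" if "v \<le> 2*n-3" for v
    using free_slots_last_le_1[OF p that] by (auto simp: le_Suc_eq)
  then show "pmf (parent_process ds (2*n-3)) p = path_weight ds (2*n-3)"
    using pmf_parent_process[OF N p] by simp
qed (rule finite_partial_trees)

lemma gen_rows_last:
  "gen_rows ds (2*n-3) = pmf_of_set (partial_Fmat ds (2*n-3) ` partial_trees ds (2*n-3))"
proof -
  have N: "2*n-3 < 2*n-2" using n_ge_2 by simp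
  have "set_pmf (parent_process ds (2*n-3)) \<noteq> {}" by (rule set_pmf_not_empty)
  then have "partial_trees ds (2*n-3) \<noteq> {}"
    using set_pmf_parent_process[OF N] by blast
  then show ?thesis
    unfolding gen_rows_eq_map_parent_process[OF N] parent_process_last
    by (rule map_pmf_of_set_inj[OF inj_on_partial_Fmat[OF N] _ finite_partial_trees])
qed

lemma diag_Fmat_eq_iff:
  assumes par_lt: "\<forall>w\<in>{1..2*n-2}. par w < w"
  shows "diag n (Fmat n par) = ds \<longleftrightarrow> (\<forall>v\<le>2*n-3. card (children n par v) = capacity ds v)"
proof -
  have "length ds = 2*n-2" using valid by (simp add: valid_diags_def)
  then have "diag n (Fmat n par) = ds \<longleftrightarrow> (\<forall>k\<le>2*n-3. Fmat n par k k + k = ds ! k + k)"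
    using n_ge_2 unfolding diag_def list_eq_iff_nth_eq by (auto simp: less_Suc_eq_le)
  also have "\<dots> \<longleftrightarrow> (\<forall>k\<le>2*n-3. (\<Sum>v\<le>k. card (children n par v)) = (\<Sum>v\<le>k. capacity ds v))"
    using n_ge_2 Fmat_diag_add_eq_sum_children[OF par_lt] sum_capacity by auto
  also have "\<dots> \<longleftrightarrow> (\<forall>v\<le>2*n-3. card (children n par v) = capacity ds v)"
    by (rule sums_atMost_eq_iff)
  finally show ?thesis .
qed

lemma card_capacity_eq_0: "card {v\<in>{..2*n-3}. capacity ds v = 0} = n - 1"
proof -
  let ?I = "{v\<in>{..2*n-3}. capacity ds v = 2}" and ?Z = "{v\<in>{..2*n-3}. capacity ds v = 0}"
  have "(\<Sum>v\<le>2*n-3. capacity ds v) = 2*n-2"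
    using sum_capacity[of "2*n-3"] n_ge_2 valid by (simp add: valid_diags_def)
  moreover have "(\<Sum>v\<le>2*n-3. capacity ds v) = (\<Sum>v\<in>?I. capacity ds v)"
    by (intro sum.mono_neutral_right) (auto simp: capacity_def)
  ultimately have I: "card ?I = n - 1" by simp
  have "?I \<union> ?Z = {..2*n-3}" by (auto simp: capacity_def)
  moreover have "card (?I \<union> ?Z) = card ?I + card ?Z" by (rule card_Un_disjoint) auto
  ultimately have "card ?I + card ?Z = 2*n-2" using n_ge_2 by simp
  with I show ?thesis by simp
qed

lemma is_fh_rts_if_children_capacity:
  assumes par_lt: "\<forall>w\<in>{1..2*n-2}. par w < w"
    and children: "\<forall>v\<le>2*n-3. card (children n par v) = capacity ds v"
  shows "is_fh_rts n par"
proof -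
  have children_above: "children n par v = {}" if "2*n-3 < v" for v
    using children_above_last[OF par_lt that] .
  have "finite (children n par v)" for v unfolding children_def by simp
  then have empty_iff: "children n par v = {} \<longleftrightarrow> card (children n par v) = 0" for v by simp
  have "v \<in> {v\<in>{0..2*n-2}. children n par v = {}} \<longleftrightarrow>
      v \<in> {v\<in>{..2*n-3}. capacity ds v = 0} \<union> {2*n-2}" for v
  proof (cases "v \<le> 2*n-3")
    case True
    then show ?thesis using children empty_iff n_ge_2 by auto
  next
    case False
    then show ?thesis using children_above n_ge_2 by auto
  qed
  then have "{v\<in>{0..2*n-2}. children n par v = {}} = {v\<in>{..2*n-3}. capacity ds v = 0} \<union> {2*n-2}"
    by blast
  moreover have "2*n-2 \<notin> {v\<in>{..2*n-3}. capacity ds v = 0}" using n_ge_2 by auto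
  ultimately have "card {v\<in>{0..2*n-2}. children n par v = {}} = n"
    using card_capacity_eq_0 n_ge_2 by (simp del: Collect_mem_eq add: card_insert_disjoint)
  moreover have "card (children n par v) = 0 \<or> card (children n par v) = 2" for v
    using children children_above by (cases "v \<le> 2*n-3") (auto simp: capacity_def)
  ultimately show ?thesis using par_lt unfolding is_fh_rts_def by blast
qed

lemma partial_Fmat_eq_Fmat:
  assumes par_lt: "\<forall>w\<in>{1..2*n-2}. par w < w"
    and children: "\<forall>v\<le>2*n-3. card (children n par v) = capacity ds v"
    and agree: "\<forall>w\<in>{1..2*n-3}. p w = par w"
  shows "partial_Fmat ds (2*n-3) p = Fmat n par"
proof (intro ext)
  fix i j
  show "partial_Fmat ds (2*n-3) p i j = Fmat n par i j"
  proof (cases "i \<le> 2*n-3 \<and> j \<le> i")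
    case True
    have later: "free_slots ds p i v = card {w\<in>{Suc i..2*n-2}. par w = v}" if "v \<le> j" for v
    proof -
      have "{w\<in>{1..2*n-2}. par w = v} = {w\<in>{1..i}. p w = v} \<union> {w\<in>{Suc i..2*n-2}. par w = v}"
        using True agree by auto
      then have "card {w\<in>{1..2*n-2}. par w = v}
          = child_count p i v + card {w\<in>{Suc i..2*n-2}. par w = v}"
        unfolding child_count_def by (simp add: card_Un_disjoint disjoint_iff)
      moreover have "card {w\<in>{1..2*n-2}. par w = v} = capacity ds v"
        using children that True unfolding children_def by auto
      ultimately show ?thesis unfolding free_slots_def by simp
    qed
    have "partial_Fmat ds (2*n-3) p i j = (\<Sum>v\<le>j. card {w\<in>{Suc i..2*n-2}. par w = v})"
      using True later by (simp add: partial_Fmat_def)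
    also have "\<dots> = card {w\<in>{Suc i..2*n-2}. par w \<le> j}" by (rule sum_card_fibres_atMost) simp
    also have "{w\<in>{Suc i..2*n-2}. par w \<le> j} = {w \<in> {1..2*n-2}. par w \<le> j \<and> i < w}" by auto
    finally show ?thesis using True n_ge_2 by (simp add: Fmat_def)
  next
    case False
    then show ?thesis using n_ge_2 by (auto simp: partial_Fmat_def Fmat_def)
  qed
qed

lemma partial_trees_last_completion:
  assumes p: "p \<in> partial_trees ds (2*n-3)"
  obtains r where "r \<le> 2*n-3" "\<forall>v\<le>2*n-3. card (children n (p(2*n-2 := r)) v) = capacity ds v"
proof -
  let ?N = "2*n-3"
  note sum = sum_free_slots_last[OF p]
  then obtain r where r: "r \<le> ?N" "free_slots ds p ?N r > 0"
    by (metis atMost_iff not_gr_zero sum.neutral zero_neq_one)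
  have free: "free_slots ds p ?N v = (if v = r then 1 else 0)" if "v \<le> ?N" for v
  proof -
    have "(\<Sum>v\<in>{r,v}. free_slots ds p ?N v) \<le> 1"
      unfolding sum[symmetric] using r that by (intro sum_mono2) auto
    then show ?thesis using r by (cases "v = r") auto
  qed
  have last: "2*n-2 = Suc ?N" using n_ge_2 by simp
  have "card (children n (p(2*n-2 := r)) v) = child_count (p(Suc ?N := r)) (Suc ?N) v" for v
    unfolding children_def child_count_def last ..
  then have card_children:
    "card (children n (p(2*n-2 := r)) v) = child_count p ?N v + (if v = r then 1 else 0)" for v
    unfolding child_count_fun_upd .
  have "card (children n (p(2*n-2 := r)) v) = capacity ds v" if "v \<le> ?N" for v
    using card_children[of v] free[OF that] child_count_le_capacity[OF p, of v]
    unfolding free_slots_def by (cases "v = r") auto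
  then have "\<forall>v\<le>?N. card (children n (p(2*n-2 := r)) v) = capacity ds v" by blast
  with r that show ?thesis by blast
qed

lemma Fmat_in_image_partial_Fmat:
  assumes fh: "is_fh_rts n par" and "diag n (Fmat n par) = ds"
  shows "Fmat n par \<in> partial_Fmat ds (2*n-3) ` partial_trees ds (2*n-3)"
proof -
  have par_lt: "\<forall>w\<in>{1..2*n-2}. par w < w" using fh unfolding is_fh_rts_def by blast
  then have children: "\<forall>v\<le>2*n-3. card (children n par v) = capacity ds v"
    using diag_Fmat_eq_iff[OF par_lt] \<open>diag n (Fmat n par) = ds\<close> by blast
  define p where "p w = (if w \<in> {1..2*n-3} then par w else 0)" for w
  have "child_count p (2*n-3) v \<le> card (children n par v)" for v
    unfolding child_count_def children_def p_def by (rule card_mono) auto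
  moreover have "card (children n par v) \<le> capacity ds v" for v
    using children children_above_last[OF par_lt, of v] by (cases "v \<le> 2*n-3") auto
  ultimately have "p \<in> partial_trees ds (2*n-3)"
    using par_lt unfolding partial_trees_def p_def by (auto intro: order_trans)
  moreover have "Fmat n par = partial_Fmat ds (2*n-3) p"
    using partial_Fmat_eq_Fmat[OF par_lt children] p_def by simp
  ultimately show ?thesis by (metis image_eqI)
qed

lemma partial_Fmat_last_in_Fmatrices:
  assumes p: "p \<in> partial_trees ds (2*n-3)"
  shows "partial_Fmat ds (2*n-3) p \<in> {F \<in> Fmatrices n. diag n F = ds}"
proof -
  obtain r where "r \<le> 2*n-3"
    and children: "\<forall>v\<le>2*n-3. card (children n (p(2*n-2 := r)) v) = capacity ds v"
    by (rule partial_trees_last_completion[OF p])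
  have par_lt: "\<forall>w\<in>{1..2*n-2}. (p(2*n-2 := r)) w < w"
    using p \<open>r \<le> 2*n-3\<close> n_ge_2 unfolding partial_trees_def by auto
  have "\<forall>w\<in>{1..2*n-3}. p w = (p(2*n-2 := r)) w" using n_ge_2 by auto
  then have eq: "partial_Fmat ds (2*n-3) p = Fmat n (p(2*n-2 := r))"
    by (rule partial_Fmat_eq_Fmat[OF par_lt children])
  have "is_fh_rts n (p(2*n-2 := r))"
    by (rule is_fh_rts_if_children_capacity[OF par_lt children])
  moreover have "diag n (Fmat n (p(2*n-2 := r))) = ds"
    using diag_Fmat_eq_iff[OF par_lt] children by blast
  ultimately have "Fmat n (p(2*n-2 := r)) \<in> {F \<in> Fmatrices n. diag n F = ds}"
    unfolding Fmatrices_def by blast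
  then show ?thesis unfolding eq .
qed

lemma Fmatrices_with_diag:
  "{F \<in> Fmatrices n. diag n F = ds} = partial_Fmat ds (2*n-3) ` partial_trees ds (2*n-3)"
  using Fmat_in_image_partial_Fmat partial_Fmat_last_in_Fmatrices
  unfolding Fmatrices_def by blast

lemma diag_gen_rows_last:
  assumes "M \<in> set_pmf (gen_rows ds (2*n-3))"
  shows "diag n M = ds"
proof -
  have N: "2*n-3 < 2*n-2" using n_ge_2 by simp
  have "M \<in> partial_Fmat ds (2*n-3) ` partial_trees ds (2*n-3)"
    using assms set_pmf_parent_process[OF N]
    unfolding gen_rows_eq_map_parent_process[OF N] by auto
  then show ?thesis unfolding Fmatrices_with_diag[symmetric] by blast
qed

end

theorem proposition4:
  fixes n :: nat and ds :: "nat list"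
  assumes "n \<ge> 2" and "ds \<in> valid_diags n"
  shows "cond_pmf (diag_top_down n) {M. diag n M = ds}
           = pmf_of_set {F \<in> Fmatrices n. diag n F = ds}"
proof -
  have "cond_pmf (diag_top_down n) {M. diag n M = ds} = gen_rows ds (2*n-3)"
    unfolding diag_top_down_def
    using finite_valid_diags assms(2) diag_gen_rows_last[OF assms(1)]
    by (rule cond_pmf_bind_pmf_of_set_fibre)
  also have "\<dots> = pmf_of_set {F \<in> Fmatrices n. diag n F = ds}"
    unfolding gen_rows_last[OF assms] Fmatrices_with_diag[OF assms] ..
  finally show ?thesis .
qed

end
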